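(* Let $(X,d)$ be a complete metric space and let $T:X\to X$ satisfy, for all $x,y\in X$ with $Tx\neq Ty$, $F(d(Tx,Ty))\le E(d(x,y))$, where $F,E:(0,\infty)\to\mathbb{R}$ satisfy: $(p_1)$ $F$ is nondecreasing; $(p_2)$ $E(t)<F(t)$ for every $t>0$; $(p_3)$ for every $\varepsilon>0$ and every sequence $(t_n)\subset(\varepsilon,\infty)$ with $t_n\to\varepsilon$, $\liminf_{n\to\infty}E(t_n)<F(\varepsilon^+)$, where $F(\varepsilon^+)=\lim_{s\to\varepsilon^+}F(s)$. Then $T$ is a CJMP-contraction, and hence a Picard operator.
   Context: $T$ is contractive if $d(Tx,Ty)<d(x,y)$ for all $x\neq y$. $T$ is a CJMP-contraction if it is contractive and for every $\varepsilon>0$ there exists $\delta>0$ such that for all $x,y\in X$, $\varepsilon<d(x,y)<\varepsilon+\delta$ implies $d(Tx,Ty)\le\varepsilon$. $T$ is a Picard operator if $T$ has a unique fixed point $u\in X$ and for every $x\in X$ the sequence $(T^nx)_{n\in\mathbb{N}}$ converges to $u$. *)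

theory Defs
  imports "HOL-Analysis.Analysis"
begin

definition contractive :: "('a::metric_space \<Rightarrow> 'a) \<Rightarrow> bool" where
  "contractive T \<longleftrightarrow> (\<forall>x y. x \<noteq> y \<longrightarrow> dist (T x) (T y) < dist x y)"

definition CJMP_contraction :: "('a::metric_space \<Rightarrow> 'a) \<Rightarrow> bool" where
  "CJMP_contraction T \<longleftrightarrow> contractive T \<and>
     (\<forall>\<epsilon>>0. \<exists>\<delta>>0. \<forall>x y. \<epsilon> < dist x y \<and> dist x y < \<epsilon> + \<delta> \<longrightarrow> dist (T x) (T y) \<le> \<epsilon>)"

definition picard_operator :: "('a::metric_space \<Rightarrow> 'a) \<Rightarrow> bool" where
  "picard_operator T \<longleftrightarrow> (\<exists>u. T u = u \<and> (\<forall>v. T v = v \<longrightarrow> v = u) \<and>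
     (\<forall>x. (\<lambda>n. (T ^^ n) x) \<longlonglongrightarrow> u))"

end

(* A CJMP-contraction is a Meir-Keeler map: pairs at distance below \<epsilon> + \<delta> are mapped within \<epsilon>.
   Along an orbit the step lengths decrease to some r; r > 0 is impossible, since a step below
   r + \<delta> is followed by one equal to r and then, by strict contractivity, by one below r.
   Once the steps are small, the Meir-Keeler property traps the orbit in a small ball, so it is
   Cauchy; its limit is a fixed point by continuity, and unique by contractivity.

   For the (F, E)-condition, contractivity follows from F(d(Tx,Ty)) \<le> E(d(x,y)) < F(d(x,y)) and
   the monotonicity of F. If the CJMP condition failed at \<epsilon>, there would be pairs with
   d(x\<^sub>n,y\<^sub>n) \<rightarrow> \<epsilon> from above and d(Tx\<^sub>n,Ty\<^sub>n) > \<epsilon>, whence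
   F(\<epsilon>+) \<le> F(d(Tx\<^sub>n,Ty\<^sub>n)) \<le> E(d(x\<^sub>n,y\<^sub>n)) for all n, contradicting (p3). *)

theory Submission
  imports Defs
begin

lemma mono_on_tendsto_at_right_Inf:
  fixes f :: "'a::{linorder_topology, dense_linorder, no_top} \<Rightarrow>
    'b::{linorder_topology, conditionally_complete_linorder}"
  assumes mono: "mono_on {a..} f"
  shows "(f \<longlongrightarrow> Inf (f ` {a<..})) (at_right a)"
proof -
  have Inf_le: "Inf (f ` {a<..}) \<le> f x" if "a < x" for x
    using mono that by (auto simp: bdd_below_def mono_on_def intro!: cInf_lower exI[of _ "f a"])
  show ?thesis
  proof (rule order_tendstoI)
    fix c assume c: "c < Inf (f ` {a<..})"
    show "\<forall>\<^sub>F x in at_right a. c < f x"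
      using eventually_at_right_less[of a]
      by (rule eventually_mono) (use Inf_le c in \<open>fastforce intro: less_le_trans\<close>)
  next
    fix c assume "Inf (f ` {a<..}) < c"
    then obtain y where y: "a < y" "f y < c"
      using cInf_lessD[of "f ` {a<..}"] gt_ex[of a] by blast
    have "\<forall>\<^sub>F x in at_right a. x < y"
      using y(1) by (auto simp: eventually_at_right)
    then show "\<forall>\<^sub>F x in at_right a. f x < c"
      using eventually_at_right_less[of a]
    proof eventually_elim
      case (elim x)
      then have "f x \<le> f y" by (auto intro!: mono_onD[OF mono])
      then show ?case using y(2) by simp
    qed
  qed
qed

lemma mono_on_Lim_at_right_le:
  fixes f :: "'a::{linorder_topology, dense_linorder, no_top} \<Rightarrow>
    'b::{linorder_topology, conditionally_complete_linorder}"
  assumes mono: "mono_on {a..} f" and "a < s"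
  shows "Lim (at_right a) f \<le> f s"
proof -
  have "Lim (at_right a) f = Inf (f ` {a<..})"
    using mono_on_tendsto_at_right_Inf[OF mono] by (intro tendsto_Lim) simp_all
  also have "\<dots> \<le> f s"
    using mono \<open>a < s\<close> by (auto simp: bdd_below_def mono_on_def intro!: cInf_lower exI[of _ "f a"])
  finally show ?thesis .
qed

lemma contractive_dist_le:
  assumes "contractive T"
  shows "dist (T x) (T y) \<le> dist x y"
  using assms unfolding contractive_def by (cases "x = y") (auto intro: less_imp_le)

lemma contractive_fixed_point_unique:
  assumes "contractive T" and "T u = u" and "T v = v"
  shows "u = v"
  using assms unfolding contractive_def by force

lemma contractive_isCont:
  assumes "contractive T"
  shows "isCont T x"
proof -
  have "1-lipschitz_on UNIV T"
    by (rule lipschitz_onI) (simp_all add: contractive_dist_le[OF assms])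
  then show ?thesis
    using lipschitz_on_continuous_on continuous_on_eq_continuous_at by blast
qed

lemma CJMP_contraction_imp_contractive: "CJMP_contraction T \<Longrightarrow> contractive T"
  by (simp add: CJMP_contraction_def)

lemma CJMP_contraction_Meir_Keeler:
  assumes CJ: "CJMP_contraction T" and "0 < \<epsilon>"
  obtains \<delta> where "0 < \<delta>" and "\<And>x y. dist x y < \<epsilon> + \<delta> \<Longrightarrow> dist (T x) (T y) \<le> \<epsilon>"
proof -
  obtain \<delta> where "0 < \<delta>"
    and \<delta>: "\<forall>x y. \<epsilon> < dist x y \<and> dist x y < \<epsilon> + \<delta> \<longrightarrow> dist (T x) (T y) \<le> \<epsilon>"
    using assms unfolding CJMP_contraction_def by blast
  moreover have "dist (T x) (T y) \<le> \<epsilon>" if "dist x y < \<epsilon> + \<delta>" for x y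
  proof (cases "\<epsilon> < dist x y")
    case True
    with \<delta> that show ?thesis by blast
  next
    case False
    with contractive_dist_le[OF CJMP_contraction_imp_contractive[OF CJ], of x y]
    show ?thesis by linarith
  qed
  ultimately show ?thesis using that by blast
qed

lemma CJMP_contraction_orbit_step_tendsto_0:
  assumes CJ: "CJMP_contraction T"
  shows "(\<lambda>n. dist ((T ^^ n) x) ((T ^^ Suc n) x)) \<longlonglongrightarrow> 0"
proof -
  define d where "d n = dist ((T ^^ n) x) ((T ^^ Suc n) x)" for n
  have ctr: "contractive T"
    using CJ by (rule CJMP_contraction_imp_contractive)
  have d_Suc: "d (Suc n) = dist (T ((T ^^ n) x)) (T ((T ^^ Suc n) x))" for n
    by (simp add: d_def)
  have "d (Suc n) \<le> d n" for n
    unfolding d_Suc by (unfold d_def) (rule contractive_dist_le[OF ctr])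
  then have "decseq d"
    by (rule decseq_SucI)
  then obtain r where r: "d \<longlonglongrightarrow> r" "\<forall>n. r \<le> d n"
    using decseq_convergent[of d 0] by (auto simp: d_def)
  have "r = 0"
  proof (rule ccontr)
    assume "r \<noteq> 0"
    moreover have "0 \<le> r"
      using r(1) by (rule LIMSEQ_le_const) (simp add: d_def)
    ultimately have "0 < r" by simp
    then obtain \<delta> where "0 < \<delta>" and \<delta>: "\<And>x y. dist x y < r + \<delta> \<Longrightarrow> dist (T x) (T y) \<le> r"
      using CJMP_contraction_Meir_Keeler[OF CJ] by blast
    obtain n where "d n < r + \<delta>"
      using order_tendstoD(2)[OF r(1), of "r + \<delta>"] \<open>0 < \<delta>\<close> eventually_sequentially by auto
    then have "d (Suc n) \<le> r"
      unfolding d_Suc by (intro \<delta>) (simp add: d_def)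
    with r(2) have d_eq: "d (Suc n) = r"
      by (meson order.antisym)
    with \<open>0 < r\<close> have "(T ^^ Suc n) x \<noteq> (T ^^ Suc (Suc n)) x"
      unfolding d_def by force
    then have "d (Suc (Suc n)) < d (Suc n)"
      using ctr unfolding contractive_def d_Suc[of "Suc n"] by (simp add: d_def)
    with d_eq r(2) show False
      by (metis not_less)
  qed
  with r(1) show ?thesis by (simp add: d_def[abs_def])
qed

lemma CJMP_contraction_orbit_Cauchy:
  assumes CJ: "CJMP_contraction T"
  shows "Cauchy (\<lambda>n. (T ^^ n) x)"
proof (rule metric_CauchyI)
  fix e :: real
  assume "0 < e"
  define \<epsilon> where "\<epsilon> = e / 4"
  have "0 < \<epsilon>" using \<open>0 < e\<close> by (simp add: \<epsilon>_def)
  then obtain \<delta> where "0 < \<delta>" and \<delta>: "\<And>x y. dist x y < \<epsilon> + \<delta> \<Longrightarrow> dist (T x) (T y) \<le> \<epsilon>"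
    using CJMP_contraction_Meir_Keeler[OF CJ] by blast
  define \<eta> where "\<eta> = min \<delta> \<epsilon>"
  have "0 < \<eta>" using \<open>0 < \<delta>\<close> \<open>0 < \<epsilon>\<close> by (simp add: \<eta>_def)
  then obtain M where M: "dist ((T ^^ M) x) ((T ^^ Suc M) x) < \<eta>"
    using order_tendstoD(2)[OF CJMP_contraction_orbit_step_tendsto_0[OF CJ], of \<eta> x]
    by (auto simp: eventually_sequentially)
  \<comment> \<open>One step from the centre plus the image of the previous ball.\<close>
  have near: "dist ((T ^^ M) x) ((T ^^ (M + k)) x) < \<epsilon> + \<eta>" for k
  proof (induction k)
    case 0
    show ?case using \<open>0 < \<epsilon>\<close> \<open>0 < \<eta>\<close> by simp
  next
    case (Suc k)
    have "dist (T ((T ^^ M) x)) (T ((T ^^ (M + k)) x)) \<le> \<epsilon>"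
      using Suc.IH by (intro \<delta>) (simp add: \<eta>_def)
    then show ?case
      using M dist_triangle[of "(T ^^ M) x" "(T ^^ (M + Suc k)) x" "(T ^^ Suc M) x"] by simp
  qed
  have "dist ((T ^^ m) x) ((T ^^ n) x) < e" if "M \<le> m" "M \<le> n" for m n
  proof -
    have "dist ((T ^^ m) x) ((T ^^ n) x) < 2 * (\<epsilon> + \<eta>)"
      using near[of "m - M"] near[of "n - M"] that
        dist_triangle3[of "(T ^^ m) x" "(T ^^ n) x" "(T ^^ M) x"] by simp
    also have "\<dots> \<le> e"
      by (simp add: \<eta>_def \<epsilon>_def)
    finally show ?thesis .
  qed
  then show "\<exists>M. \<forall>m\<ge>M. \<forall>n\<ge>M. dist ((T ^^ m) x) ((T ^^ n) x) < e"
    by blast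
qed

lemma CJMP_contraction_imp_picard_operator:
  fixes T :: "'a::complete_space \<Rightarrow> 'a"
  assumes CJ: "CJMP_contraction T"
  shows "picard_operator T"
proof -
  have ctr: "contractive T"
    using CJ by (rule CJMP_contraction_imp_contractive)
  have orbit_fixed_point: "\<exists>u. T u = u \<and> (\<lambda>n. (T ^^ n) x) \<longlonglongrightarrow> u" for x
  proof -
    obtain u where u: "(\<lambda>n. (T ^^ n) x) \<longlonglongrightarrow> u"
      using Cauchy_convergent[OF CJMP_contraction_orbit_Cauchy[OF CJ]] by (auto simp: convergent_def)
    have "(\<lambda>n. T ((T ^^ n) x)) \<longlonglongrightarrow> T u"
      using isCont_tendsto_compose[OF contractive_isCont[OF ctr] u] .
    moreover have "(\<lambda>n. T ((T ^^ n) x)) \<longlonglongrightarrow> u"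
      using LIMSEQ_Suc[OF u] by simp
    ultimately have "T u = u"
      by (rule LIMSEQ_unique)
    with u show ?thesis by blast
  qed
  then obtain u where "T u = u" by blast
  then show ?thesis
    unfolding picard_operator_def
    using orbit_fixed_point contractive_fixed_point_unique[OF ctr] by metis
qed

definition FE_contraction :: "(real \<Rightarrow> real) \<Rightarrow> (real \<Rightarrow> real) \<Rightarrow> ('a::metric_space \<Rightarrow> 'a) \<Rightarrow> bool"
  where "FE_contraction F E T \<longleftrightarrow> (\<forall>x y. T x \<noteq> T y \<longrightarrow> F (dist (T x) (T y)) \<le> E (dist x y))"

lemma FE_contractionD:
  "FE_contraction F E T \<Longrightarrow> T x \<noteq> T y \<Longrightarrow> F (dist (T x) (T y)) \<le> E (dist x y)"
  by (simp add: FE_contraction_def)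

lemma FE_contraction_imp_contractive:
  fixes T :: "'a::metric_space \<Rightarrow> 'a"
  assumes FE: "FE_contraction F E T" and mono: "mono_on {0<..} F"
    and E_less_F: "\<And>t. 0 < t \<Longrightarrow> E t < F t"
  shows "contractive T"
  unfolding contractive_def
proof (intro allI impI)
  fix x y :: 'a
  assume "x \<noteq> y"
  show "dist (T x) (T y) < dist x y"
  proof (rule ccontr)
    assume "\<not> ?thesis"
    then have le: "dist x y \<le> dist (T x) (T y)" by simp
    with \<open>x \<noteq> y\<close> have "T x \<noteq> T y" by auto
    have "F (dist x y) \<le> F (dist (T x) (T y))"
      using \<open>x \<noteq> y\<close> le by (intro mono_onD[OF mono]) auto
    also have "\<dots> \<le> E (dist x y)"
      using FE \<open>T x \<noteq> T y\<close> by (rule FE_contractionD)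
    also have "\<dots> < F (dist x y)"
      using \<open>x \<noteq> y\<close> by (simp add: E_less_F)
    finally show False by simp
  qed
qed

lemma FE_contraction_imp_CJMP_contraction:
  assumes FE: "FE_contraction F E T" and mono: "mono_on {0<..} F"
    and E_less_F: "\<And>t. 0 < t \<Longrightarrow> E t < F t"
    and liminf_E_less: "\<And>\<epsilon> t. 0 < \<epsilon> \<Longrightarrow> (\<And>n. \<epsilon> < t n) \<Longrightarrow> t \<longlonglongrightarrow> \<epsilon> \<Longrightarrow>
      liminf (\<lambda>n. ereal (E (t n))) < ereal (Lim (at_right \<epsilon>) F)"
  shows "CJMP_contraction T"
proof -
  have "\<exists>\<delta>>0. \<forall>x y. \<epsilon> < dist x y \<and> dist x y < \<epsilon> + \<delta> \<longrightarrow> dist (T x) (T y) \<le> \<epsilon>"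
    if "0 < \<epsilon>" for \<epsilon>
  proof (rule ccontr)
    assume "\<not> ?thesis"
    then have "\<forall>n. \<exists>x y. \<epsilon> < dist x y \<and> dist x y < \<epsilon> + inverse (Suc n) \<and> \<epsilon> < dist (T x) (T y)"
      by (metis not_le of_nat_0_less_iff positive_imp_inverse_positive zero_less_Suc)
    then obtain X Y where XY: "\<And>n. \<epsilon> < dist (X n) (Y n)"
      "\<And>n. dist (X n) (Y n) < \<epsilon> + inverse (Suc n)" "\<And>n. \<epsilon> < dist (T (X n)) (T (Y n))"
      by metis
    define t where "t n = dist (X n) (Y n)" for n
    have t_gt: "\<epsilon> < t n" for n
      using XY(1) by (simp add: t_def)
    have "t \<longlonglongrightarrow> \<epsilon>"
      by (rule tendsto_sandwich[OF _ _ tendsto_const LIMSEQ_inverse_real_of_nat_add])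
        (use XY in \<open>auto simp: t_def intro!: always_eventually less_imp_le\<close>)
    have "ereal (Lim (at_right \<epsilon>) F) \<le> ereal (E (t n))" for n
    proof -
      have "mono_on {\<epsilon>..} F"
        using mono by (rule mono_on_subset) (use \<open>0 < \<epsilon>\<close> in auto)
      then have "Lim (at_right \<epsilon>) F \<le> F (dist (T (X n)) (T (Y n)))"
        using XY(3) by (rule mono_on_Lim_at_right_le)
      also have "\<dots> \<le> E (t n)"
        unfolding t_def using FE by (rule FE_contractionD) (use XY(3)[of n] \<open>0 < \<epsilon>\<close> in auto)
      finally show ?thesis by simp
    qed
    then have "ereal (Lim (at_right \<epsilon>) F) \<le> liminf (\<lambda>n. ereal (E (t n)))"
      by (intro Liminf_bounded always_eventually) blast
    with liminf_E_less[OF \<open>0 < \<epsilon>\<close> t_gt \<open>t \<longlonglongrightarrow> \<epsilon>\<close>] show False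
      by simp
  qed
  with FE_contraction_imp_contractive[OF FE mono E_less_F] show ?thesis
    unfolding CJMP_contraction_def by blast
qed

theorem mainTheorem11:
  fixes T :: "'a::complete_space \<Rightarrow> 'a" and F E :: "real \<Rightarrow> real"
  assumes contr: "\<forall>x y. T x \<noteq> T y \<longrightarrow> F (dist (T x) (T y)) \<le> E (dist x y)"
    and p1: "\<forall>s t. 0 < s \<and> s \<le> t \<longrightarrow> F s \<le> F t"
    and p2: "\<forall>t>0. E t < F t"
    and p3: "\<forall>\<epsilon>>0. \<forall>t :: nat \<Rightarrow> real. (\<forall>n. \<epsilon> < t n) \<and> t \<longlonglongrightarrow> \<epsilon> \<longrightarrow>
               liminf (\<lambda>n. ereal (E (t n))) < ereal (Lim (at_right \<epsilon>) F)"
  shows "CJMP_contraction T \<and> picard_operator T"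
proof -
  have FE: "FE_contraction F E T"
    using contr by (simp add: FE_contraction_def)
  have mono: "mono_on {0<..} F"
    using p1 by (auto intro: mono_onI)
  have "CJMP_contraction T"
    using FE_contraction_imp_CJMP_contraction[OF FE mono] p2 p3 by blast
  then show ?thesis
    using CJMP_contraction_imp_picard_operator by blast
qed

end
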